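(* For every code $u\in\mathrm{PR}_X$ and every $x\in X_\bot$, writing $e(u,x) = (e_{\mathrm{map}}(u,x), e_{\mathrm{arg}}(u,x))$: (1) if $c(u) > 0$ then $c(e_{\mathrm{map}}(u,x)) < c(u)$ in $\mathbb{N}[\omega]$; (2) $c(u) = 0$ if and only if $u = \mathrm{id}$, and in that case $e(u,x) = (u,x)$.
   Context: Universe: $X$ is the smallest set containing the numerals $\nu(n)$ ($n\in\mathbb{N}$) and closed under forming pairs $\langle x;y\rangle$ ($x,y\in X$); $X_\bot = X\cup\{\bot\}$. Codes $\mathrm{PR}_X$: the formal terms generated from the basic symbols $\mathrm{bas}=\{\mathrm{id},\mathring 0,\mathring{\mathrm s},\mathring\Pi,\mathring\Delta,\mathring\ell,\mathring{\mathrm r}\}$ by internal composition $\langle v\odot u\rangle$, internal induced $\langle u;v\rangle$, internal product $\langle u\# v\rangle$ and internal iteration $u^{\$}$. Basic symbols act on $X_\bot$: $\mathrm{id}(x)=x$; $\mathring 0(x)=\nu(0)$; $\mathring{\mathrm s}(\nu(n))=\nu(n+1)$; $\mathring\Pi(x)=\nu(0)$; $\mathring\Delta(x)=\langle x;x\rangle$; $\mathring\ell\langle x;y\rangle = x$, $\mathring{\mathrm r}\langle x;y\rangle = y$; in all other cases (and on $\bot$, except for $\mathrm{id}$) the value is $\bot$. Code expansion: $u^{[0]}=\mathrm{id}$, $u^{[n+1]}=\langle u\odot u^{[n]}\rangle$. Evaluation step $e:\mathrm{PR}_X\times X_\bot\to\mathrm{PR}_X\times X_\bot$, defined by recursion on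 the term structure, taking the first applicable case: (a) $u=\mathrm{ba}\in\mathrm{bas}$: $e(\mathrm{ba},x)=(\mathrm{id},\mathrm{ba}(x))$; (b) $e(\langle v\odot\mathrm{ba}\rangle,x) = (v,\mathrm{ba}(x))$ for $\mathrm{ba}\in\mathrm{bas}$; (c) for $u\notin\mathrm{bas}$: $e(\langle v\odot u\rangle,x) = (\langle v\odot e_{\mathrm{map}}(u,x)\rangle, e_{\mathrm{arg}}(u,x))$; (d) $e(\langle\mathrm{id}\#\mathrm{id}\rangle,\langle y;z\rangle) = (\mathrm{id},\langle y;z\rangle)$; (e) otherwise $e(\langle u\# v\rangle,\langle y;z\rangle) = (\langle e_{\mathrm{map}}(u,y)\# e_{\mathrm{map}}(v,z)\rangle,\langle e_{\mathrm{arg}}(u,y);e_{\mathrm{arg}}(v,z)\rangle)$; (f) $e(\langle\mathrm{id};\mathrm{id}\rangle,z) = (\mathrm{id},\langle z;z\rangle)$ for $z\in X$; (g) otherwise $e(\langle u;v\rangle,z) = (\langle e_{\mathrm{map}}(u,z);e_{\mathrm{map}}(v,z)\rangle,\langle e_{\mathrm{arg}}(u,z);e_{\mathrm{arg}}(v,z)\rangle)$ for $z\in X$; (h) $e(u^{\$},\langle y;\nu(n)\rangle) = (u^{[n]},y)$; (i) in all remaining cases $e(u,x)=(\mathrm{id},\bot)$. Complexity $c:\mathrm{PR}_X\to\mathbb{N}[\omega]$ (polynomials in $\omega$ with natural-number coefficients): $c(\mathrm{id})=0$; $c(\mathrm{ba})=1$ for the other basic symbols; $c\langle v\odot u\rangle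 = c\langle u\#v\rangle = c\langle u;v\rangle = c(u)+c(v)+1$; $c(u^{\$}) = (c(u)+1)\cdot\omega$. $\mathbb{N}[\omega]$ is ordered lexicographically with priority to higher powers: $p<q$ iff $p\ne q$ and at the highest power of $\omega$ where their coefficients differ, the coefficient of $p$ is smaller. *)

theory Defs
  imports "HOL-Computational_Algebra.Polynomial"
begin

text \<open>The universe X: numerals and pairs. X_bot is rendered as X option (None = bottom).\<close>
datatype X = Nu nat | Pr X X

text \<open>Codes PR_X. Comp v u stands for the internal composition (v after u),
  Ind u v for the internal induced map, Prod u v for the internal product, Iter u for u-dollar.\<close>
datatype code = Id | Zero | Suc_c | Pi_c | Delta_c | Left_c | Right_c
  | Comp code code | Ind code code | Prod code code | Iter code

definition bas :: "code set" where
  "bas = {Id, Zero, Suc_c, Pi_c, Delta_c, Left_c, Right_c}"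

fun bas_ap :: "code \<Rightarrow> X option \<Rightarrow> X option" where
  "bas_ap Id x = x"
| "bas_ap Zero (Some x) = Some (Nu 0)"
| "bas_ap Suc_c (Some (Nu n)) = Some (Nu (Suc n))"
| "bas_ap Pi_c (Some x) = Some (Nu 0)"
| "bas_ap Delta_c (Some x) = Some (Pr x x)"
| "bas_ap Left_c (Some (Pr x y)) = Some x"
| "bas_ap Right_c (Some (Pr x y)) = Some y"
| "bas_ap _ _ = None"

fun pair_bot :: "X option \<Rightarrow> X option \<Rightarrow> X option" where
  "pair_bot (Some a) (Some b) = Some (Pr a b)"
| "pair_bot _ _ = None"

fun expand :: "code \<Rightarrow> nat \<Rightarrow> code" where
  "expand u 0 = Id"
| "expand u (Suc n) = Comp u (expand u n)"

fun ev :: "code \<Rightarrow> X option \<Rightarrow> code \<times> X option" where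
  "ev (Comp v u) x =
     (if u \<in> bas then (v, bas_ap u x)
      else (Comp v (fst (ev u x)), snd (ev u x)))"
| "ev (Prod u v) x =
     (case x of
        Some (Pr y z) \<Rightarrow>
          (if u = Id \<and> v = Id then (Id, Some (Pr y z))
           else (Prod (fst (ev u (Some y))) (fst (ev v (Some z))),
                 pair_bot (snd (ev u (Some y))) (snd (ev v (Some z)))))
      | _ \<Rightarrow> (Id, None))"
| "ev (Ind u v) x =
     (case x of
        Some z \<Rightarrow>
          (if u = Id \<and> v = Id then (Id, Some (Pr z z))
           else (Ind (fst (ev u (Some z))) (fst (ev v (Some z))),
                 pair_bot (snd (ev u (Some z))) (snd (ev v (Some z)))))
      | None \<Rightarrow> (Id, None))"
| "ev (Iter u) x =
     (case x of
        Some (Pr y (Nu n)) \<Rightarrow> (expand u n, Some y)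
      | _ \<Rightarrow> (Id, None))"
| "ev ba x = (Id, bas_ap ba x)"

abbreviation emap :: "code \<Rightarrow> X option \<Rightarrow> code" where
  "emap u x \<equiv> fst (ev u x)"

abbreviation earg :: "code \<Rightarrow> X option \<Rightarrow> X option" where
  "earg u x \<equiv> snd (ev u x)"

text \<open>N[omega] as nat polynomials in omega; complexity.\<close>
definition omega :: "nat poly" where "omega = [:0, 1:]"

fun cplx :: "code \<Rightarrow> nat poly" where
  "cplx Id = 0"
| "cplx (Comp v u) = cplx u + cplx v + 1"
| "cplx (Prod u v) = cplx u + cplx v + 1"
| "cplx (Ind u v) = cplx u + cplx v + 1"
| "cplx (Iter u) = (cplx u + 1) * omega"
| "cplx _ = 1"

definition poly_lex_less :: "nat poly \<Rightarrow> nat poly \<Rightarrow> bool" where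
  "poly_lex_less p q \<longleftrightarrow> p \<noteq> q \<and>
     coeff p (Max {i. coeff p i \<noteq> coeff q i}) < coeff q (Max {i. coeff p i \<noteq> coeff q i})"

end

theory Submission
  imports Defs
begin

text \<open>A step strictly lowers the complexity: composition with a basic symbol drops that symbol,
  a step inside a composition, pairing or product lowers one component and leaves the others
  unchanged, and unfolding u$ at the numeral n replaces the monomial (c(u) + 1) \<omega> by
  n (c(u) + 1), which has lower degree in \<omega>.\<close>

lemma poly_lex_less_iff:
  "poly_lex_less p q \<longleftrightarrow> (\<exists>k. coeff p k < coeff q k \<and> (\<forall>i>k. coeff p i = coeff q i))"
proof -
  let ?S = "{i. coeff p i \<noteq> coeff q i}"
  have "?S \<subseteq> {..max (degree p) (degree q)}"
    by (auto simp: coeff_eq_0 intro: ccontr)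
  then have fin: "finite ?S"
    using finite_subset by blast
  show ?thesis
  proof
    assume "poly_lex_less p q"
    then have "coeff p (Max ?S) < coeff q (Max ?S)"
      unfolding poly_lex_less_def by auto
    moreover have "\<forall>i>Max ?S. coeff p i = coeff q i"
      using fin Max_ge not_le by blast
    ultimately show "\<exists>k. coeff p k < coeff q k \<and> (\<forall>i>k. coeff p i = coeff q i)"
      by blast
  next
    assume "\<exists>k. coeff p k < coeff q k \<and> (\<forall>i>k. coeff p i = coeff q i)"
    then obtain k where less: "coeff p k < coeff q k" and above: "\<forall>i>k. coeff p i = coeff q i"
      by blast
    have "Max ?S = k"
      using fin less above not_le by (intro Max_eqI) auto
    then show "poly_lex_less p q"
      unfolding poly_lex_less_def using less by auto
  qed
qed

lemma poly_lex_less_add_right: "poly_lex_less p q \<Longrightarrow> poly_lex_less (p + r) (q + r)"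
  unfolding poly_lex_less_iff by auto

lemma poly_lex_less_add_left: "poly_lex_less p q \<Longrightarrow> poly_lex_less (r + p) (r + q)"
  unfolding poly_lex_less_iff by auto

lemma poly_lex_less_trans:
  assumes "poly_lex_less p q" and "poly_lex_less q r"
  shows "poly_lex_less p r"
proof -
  obtain k1 where 1: "coeff p k1 < coeff q k1" "\<forall>i>k1. coeff p i = coeff q i"
    using assms(1) unfolding poly_lex_less_iff by blast
  obtain k2 where 2: "coeff q k2 < coeff r k2" "\<forall>i>k2. coeff q i = coeff r i"
    using assms(2) unfolding poly_lex_less_iff by blast
  show ?thesis
    unfolding poly_lex_less_iff using 1 2
    by (cases k1 k2 rule: linorder_cases) (auto intro: exI[of _ k1] exI[of _ k2])
qed

lemma poly_lex_less_add_mono: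
  assumes "poly_lex_less p p' \<or> p = p'" and "poly_lex_less q q' \<or> q = q'"
    and "poly_lex_less p p' \<or> poly_lex_less q q'"
  shows "poly_lex_less (p + q) (p' + q')"
  using assms poly_lex_less_trans[OF poly_lex_less_add_right poly_lex_less_add_left]
  by (auto intro: poly_lex_less_add_right poly_lex_less_add_left)

lemma poly_lex_less_zero_iff: "poly_lex_less 0 q \<longleftrightarrow> q \<noteq> 0"
proof
  assume "q \<noteq> 0"
  then have "coeff q (degree q) > 0"
    using leading_coeff_neq_0 by blast
  then show "poly_lex_less 0 q"
    unfolding poly_lex_less_iff by (intro exI[of _ "degree q"]) (auto simp: coeff_eq_0)
qed (simp add: poly_lex_less_def)

lemma poly_lex_less_smult_pCons:
  fixes p :: "nat poly"
  assumes "p \<noteq> 0"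
  shows "poly_lex_less (smult n p) (pCons 0 p)"
proof -
  have "coeff p (degree p) > 0"
    using assms leading_coeff_neq_0 by blast
  then show ?thesis
    unfolding poly_lex_less_iff
    by (intro exI[of _ "Suc (degree p)"]) (auto simp: coeff_eq_0 coeff_pCons split: nat.split)
qed

lemma add_one_neq_zero: "p + 1 \<noteq> (0 :: nat poly)"
proof
  assume "p + 1 = 0"
  then have "coeff (p + 1) 0 = 0" by simp
  then show False by simp
qed

lemma smult_Suc: "smult (Suc n) p = smult n p + p"
  by (metis Suc_eq_plus1 smult_add_left smult_1_left)

lemma cplx_Iter: "cplx (Iter u) = pCons 0 (cplx u + 1)"
  by (simp add: omega_def flip: One_nat_def)

lemma cplx_expand: "cplx (expand u n) = smult n (cplx u + 1)"
  by (induction n) (simp_all add: smult_Suc add.assoc)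

lemma cplx_eq_zero_iff: "cplx u = 0 \<longleftrightarrow> u = Id"
proof (cases u)
  case (Iter w)
  then show ?thesis
    by (simp only: cplx_Iter pCons_eq_0_iff add_one_neq_zero) simp
qed (simp_all add: add_one_neq_zero flip: add.assoc)

lemma cplx_pos: "u \<noteq> Id \<Longrightarrow> poly_lex_less 0 (cplx u)"
  by (simp add: poly_lex_less_zero_iff cplx_eq_zero_iff)

lemma cplx_Iter_expand_less: "poly_lex_less (cplx (expand u n)) (cplx (Iter u))"
  unfolding cplx_expand cplx_Iter by (rule poly_lex_less_smult_pCons[OF add_one_neq_zero])

lemma cplx_pair_step_less:
  assumes "\<not> (u = Id \<and> v = Id)"
    and "u \<noteq> Id \<Longrightarrow> poly_lex_less (cplx (emap u y)) (cplx u)"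
    and "v \<noteq> Id \<Longrightarrow> poly_lex_less (cplx (emap v z)) (cplx v)"
  shows "poly_lex_less (cplx (emap u y) + cplx (emap v z) + 1) (cplx u + cplx v + 1)"
proof (rule poly_lex_less_add_right, rule poly_lex_less_add_mono)
  show "poly_lex_less (cplx (emap u y)) (cplx u) \<or> cplx (emap u y) = cplx u"
    using assms(2) by (cases "u = Id") auto
  show "poly_lex_less (cplx (emap v z)) (cplx v) \<or> cplx (emap v z) = cplx v"
    using assms(3) by (cases "v = Id") auto
  show "poly_lex_less (cplx (emap u y)) (cplx u) \<or> poly_lex_less (cplx (emap v z)) (cplx v)"
    using assms by blast
qed

lemma cplx_emap_less: "u \<noteq> Id \<Longrightarrow> poly_lex_less (cplx (emap u x)) (cplx u)"
proof (induction u arbitrary: x)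
  case (Comp v u)
  show ?case
  proof (cases "u \<in> bas")
    case True
    have "poly_lex_less (0 + cplx v) (cplx u + 1 + cplx v)"
      using add_one_neq_zero poly_lex_less_zero_iff poly_lex_less_add_right by blast
    then show ?thesis
      using True by (simp add: algebra_simps)
  next
    case False
    then have "poly_lex_less (cplx (emap u x)) (cplx u)"
      by (intro Comp.IH(2)) (auto simp: bas_def)
    then have "poly_lex_less (cplx (emap u x) + (cplx v + 1)) (cplx u + (cplx v + 1))"
      by (rule poly_lex_less_add_right)
    then show ?thesis
      using False by (simp add: algebra_simps)
  qed
next
  case (Ind u v)
  show ?case
  proof (cases "x = None \<or> (u = Id \<and> v = Id)")
    case True
    then have "emap (Ind u v) x = Id"
      by (auto split: option.split)
    then show ?thesis
      using cplx_pos[OF Ind.prems] by simp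
  next
    case False
    then obtain z where "x = Some z"
      by auto
    then show ?thesis
      using False cplx_pair_step_less[OF _ Ind.IH] by auto
  qed
next
  case (Prod u v)
  show ?case
  proof (cases "(\<exists>y z. x = Some (Pr y z)) \<and> \<not> (u = Id \<and> v = Id)")
    case True
    then obtain y z where "x = Some (Pr y z)"
      by blast
    then show ?thesis
      using True cplx_pair_step_less[OF _ Prod.IH] by auto
  next
    case False
    then have "emap (Prod u v) x = Id"
      by (auto split: option.split X.split)
    then show ?thesis
      using cplx_pos[OF Prod.prems] by simp
  qed
next
  case (Iter u)
  show ?case
  proof (cases "\<exists>y n. x = Some (Pr y (Nu n))")
    case True
    then show ?thesis
      using cplx_Iter_expand_less by auto
  next
    case False
    then have "emap (Iter u) x = Id"
      by (auto split: option.split X.split)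
    then show ?thesis
      using cplx_pos[OF Iter.prems] by simp
  qed
qed (simp_all add: poly_lex_less_zero_iff)

theorem mainTheorem9:
  fixes u :: code and x :: "X option"
  shows "(poly_lex_less 0 (cplx u) \<longrightarrow> poly_lex_less (cplx (emap u x)) (cplx u))
       \<and> ((cplx u = 0 \<longleftrightarrow> u = Id) \<and> (cplx u = 0 \<longrightarrow> ev u x = (u, x)))"
proof (intro conjI impI)
  show "poly_lex_less (cplx (emap u x)) (cplx u)" if "poly_lex_less 0 (cplx u)"
    using that cplx_emap_less poly_lex_less_zero_iff cplx_eq_zero_iff by blast
  show "cplx u = 0 \<longleftrightarrow> u = Id"
    by (rule cplx_eq_zero_iff)
  show "ev u x = (u, x)" if "cplx u = 0"
    using that cplx_eq_zero_iff by simp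
qed

end
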